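(* Let $G$ be a finite $2$-connected graph, $T$ its Tutte's tree, and $\delta_G$ the spread of $G$. For every $n\ge2$, if the diameter of $T$ is greater than $4n\cdot\delta_G$, then $G$ contains at least $n$ parallel hinges.
   Context: Graphs are finite and undirected. A tree decomposition of $G$ is a pair $(T,(V_t))$ with $T$ a tree, $V_t\subseteq V_G$, $\bigcup_t V_t=V_G$, every edge inside some $V_t$, and $V_{t_1}\cap V_{t_3}\subseteq V_{t_2}$ whenever $t_2$ is on the $t_1$–$t_3$ path. The torso $\tau_t$ is $G[V_t]$ plus, for each $tt'\in E_T$, an edge joining the two vertices of $V_t\cap V_{t'}$. The Tutte decomposition of a $2$-connected graph is the unique tree decomposition with $|V_t\cap V_{t'}|=2$ for $tt'\in E_T$ whose torsos are $k$-bonds ($k\ge3$), $3$-connected graphs or cycles; $T$ is Tutte's tree. A $2$-separation is $(A,B)$ with $A\cup B=V_G$, $|A\cap B|=2$ and no edge between $A\setminus B$ and $B\setminus A$; $A\cap B$ is a hinge if $G[A]$ or $G[B]$ is $2$-connected. The spread of a vertex is the number of hinges containing it; $\delta_G$ is the maximum spread over all vertices. A sequence of hinges is parallel if the hinges are pairwise disjoint and there is a path $t_1\dots t_p$ in $T$ such that each hinge is contained in some $V_{t_j}$. *)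

theory Defs
  imports Main
begin

definition graph :: "'a set \<Rightarrow> 'a set set \<Rightarrow> bool" where
  "graph V E \<longleftrightarrow> finite V \<and> (\<forall>e\<in>E. e \<subseteq> V \<and> card e = 2)"

definition induced :: "'a set set \<Rightarrow> 'a set \<Rightarrow> 'a set set" where
  "induced E A = {e\<in>E. e \<subseteq> A}"

definition adj_rel :: "'a set set \<Rightarrow> ('a \<times> 'a) set" where
  "adj_rel E = {(x,y). {x,y} \<in> E}"

definition connected_graph :: "'a set \<Rightarrow> 'a set set \<Rightarrow> bool" where
  "connected_graph V E \<longleftrightarrow> V \<noteq> {} \<and> (\<forall>x\<in>V. \<forall>y\<in>V. (x,y) \<in> (adj_rel (induced E V))\<^sup>*)"

definition k_connected :: "nat \<Rightarrow> 'a set \<Rightarrow> 'a set set \<Rightarrow> bool" where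
  "k_connected k V E \<longleftrightarrow> finite V \<and> card V > k \<and>
     (\<forall>S. S \<subseteq> V \<and> card S < k \<longrightarrow> connected_graph (V - S) (induced E (V - S)))"

abbreviation two_connected :: "'a set \<Rightarrow> 'a set set \<Rightarrow> bool" where
  "two_connected \<equiv> k_connected 2"

abbreviation three_connected :: "'a set \<Rightarrow> 'a set set \<Rightarrow> bool" where
  "three_connected \<equiv> k_connected 3"

definition cycle_graph :: "'a set \<Rightarrow> 'a set set \<Rightarrow> bool" where
  "cycle_graph V E \<longleftrightarrow> finite V \<and> card V \<ge> 3 \<and> connected_graph V E \<and>
     (\<forall>v\<in>V. card {e\<in>E. v \<in> e} = 2)"

definition tree :: "'b set \<Rightarrow> 'b set set \<Rightarrow> bool" where
  "tree N ET \<longleftrightarrow> graph N ET \<and> connected_graph N ET \<and> card ET + 1 = card N"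

definition is_path :: "'b set \<Rightarrow> 'b set set \<Rightarrow> 'b list \<Rightarrow> bool" where
  "is_path N ET ps \<longleftrightarrow> ps \<noteq> [] \<and> distinct ps \<and> set ps \<subseteq> N \<and>
     (\<forall>i. Suc i < length ps \<longrightarrow> {ps ! i, ps ! Suc i} \<in> ET)"

definition tree_dist :: "'b set \<Rightarrow> 'b set set \<Rightarrow> 'b \<Rightarrow> 'b \<Rightarrow> nat" where
  "tree_dist N ET s t = (LEAST k. \<exists>ps. is_path N ET ps \<and> hd ps = s \<and> last ps = t \<and> length ps = Suc k)"

definition diameter :: "'b set \<Rightarrow> 'b set set \<Rightarrow> nat" where
  "diameter N ET = Max {tree_dist N ET s t | s t. s \<in> N \<and> t \<in> N}"

definition tree_decomposition :: "'a set \<Rightarrow> 'a set set \<Rightarrow> 'b set \<Rightarrow> 'b set set \<Rightarrow> ('b \<Rightarrow> 'a set) \<Rightarrow> bool" where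
  "tree_decomposition V E N ET Vb \<longleftrightarrow> tree N ET \<and> (\<forall>t\<in>N. Vb t \<subseteq> V) \<and>
     (\<Union>t\<in>N. Vb t) = V \<and> (\<forall>e\<in>E. \<exists>t\<in>N. e \<subseteq> Vb t) \<and>
     (\<forall>ps. is_path N ET ps \<longrightarrow> (\<forall>t\<in>set ps. Vb (hd ps) \<inter> Vb (last ps) \<subseteq> Vb t))"

text \<open>Multiplicity of the pair p in the torso at t (multigraph torso): one virtual edge for
  each tree edge at t whose adhesion set is p, plus the real edge p if it is assigned (by beta) to t.\<close>
definition torso_mult :: "'a set set \<Rightarrow> 'b set set \<Rightarrow> ('b \<Rightarrow> 'a set) \<Rightarrow> ('a set \<Rightarrow> 'b) \<Rightarrow> 'b \<Rightarrow> 'a set \<Rightarrow> nat" where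
  "torso_mult E ET Vb beta t p =
     card {t'. {t,t'} \<in> ET \<and> Vb t \<inter> Vb t' = p} + (if p \<in> E \<and> beta p = t then 1 else 0)"

definition torso_edges :: "'a set set \<Rightarrow> 'b set set \<Rightarrow> ('b \<Rightarrow> 'a set) \<Rightarrow> ('a set \<Rightarrow> 'b) \<Rightarrow> 'b \<Rightarrow> 'a set set" where
  "torso_edges E ET Vb beta t = {p. p \<subseteq> Vb t \<and> card p = 2 \<and> torso_mult E ET Vb beta t p \<ge> 1}"

definition torso_simple :: "'a set set \<Rightarrow> 'b set set \<Rightarrow> ('b \<Rightarrow> 'a set) \<Rightarrow> ('a set \<Rightarrow> 'b) \<Rightarrow> 'b \<Rightarrow> bool" where
  "torso_simple E ET Vb beta t \<longleftrightarrow> (\<forall>p. torso_mult E ET Vb beta t p \<le> 1)"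

definition is_bond :: "'a set set \<Rightarrow> 'b set set \<Rightarrow> ('b \<Rightarrow> 'a set) \<Rightarrow> ('a set \<Rightarrow> 'b) \<Rightarrow> 'b \<Rightarrow> bool" where
  "is_bond E ET Vb beta t \<longleftrightarrow> card (Vb t) = 2 \<and> torso_mult E ET Vb beta t (Vb t) \<ge> 3"

definition is_cycle_torso :: "'a set set \<Rightarrow> 'b set set \<Rightarrow> ('b \<Rightarrow> 'a set) \<Rightarrow> ('a set \<Rightarrow> 'b) \<Rightarrow> 'b \<Rightarrow> bool" where
  "is_cycle_torso E ET Vb beta t \<longleftrightarrow> torso_simple E ET Vb beta t \<and>
     cycle_graph (Vb t) (torso_edges E ET Vb beta t)"

definition is_3conn_torso :: "'a set set \<Rightarrow> 'b set set \<Rightarrow> ('b \<Rightarrow> 'a set) \<Rightarrow> ('a set \<Rightarrow> 'b) \<Rightarrow> 'b \<Rightarrow> bool" where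
  "is_3conn_torso E ET Vb beta t \<longleftrightarrow> torso_simple E ET Vb beta t \<and>
     three_connected (Vb t) (torso_edges E ET Vb beta t)"

text \<open>The Tutte decomposition (SPQR form): adhesion 2, every real edge is assigned to one bag
  containing it, torsos are k-bonds (k \<ge> 3), cycles or 3-connected; no two adjacent bonds and
  no two adjacent cycles (these make it unique).\<close>
definition tutte_decomposition :: "'a set \<Rightarrow> 'a set set \<Rightarrow> 'b set \<Rightarrow> 'b set set \<Rightarrow> ('b \<Rightarrow> 'a set) \<Rightarrow> bool" where
  "tutte_decomposition V E N ET Vb \<longleftrightarrow> tree_decomposition V E N ET Vb \<and>
     (\<forall>t t'. {t,t'} \<in> ET \<longrightarrow> card (Vb t \<inter> Vb t') = 2) \<and>
     (\<exists>beta. (\<forall>e\<in>E. beta e \<in> N \<and> e \<subseteq> Vb (beta e)) \<and>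
        (\<forall>t\<in>N. is_bond E ET Vb beta t \<or> is_cycle_torso E ET Vb beta t \<or> is_3conn_torso E ET Vb beta t) \<and>
        (\<forall>t t'. {t,t'} \<in> ET \<longrightarrow> \<not> (is_bond E ET Vb beta t \<and> is_bond E ET Vb beta t')) \<and>
        (\<forall>t t'. {t,t'} \<in> ET \<longrightarrow> \<not> (is_cycle_torso E ET Vb beta t \<and> is_cycle_torso E ET Vb beta t')))"

definition sep2 :: "'a set \<Rightarrow> 'a set set \<Rightarrow> 'a set \<Rightarrow> 'a set \<Rightarrow> bool" where
  "sep2 V E A B \<longleftrightarrow> A \<union> B = V \<and> card (A \<inter> B) = 2 \<and> A - B \<noteq> {} \<and> B - A \<noteq> {} \<and>
     \<not> (\<exists>x\<in>A - B. \<exists>y\<in>B - A. {x,y} \<in> E)"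

definition hinge :: "'a set \<Rightarrow> 'a set set \<Rightarrow> 'a set \<Rightarrow> bool" where
  "hinge V E X \<longleftrightarrow> (\<exists>A B. sep2 V E A B \<and> A \<inter> B = X \<and>
     (two_connected A (induced E A) \<or> two_connected B (induced E B)))"

definition spread :: "'a set \<Rightarrow> 'a set set \<Rightarrow> 'a \<Rightarrow> nat" where
  "spread V E v = card {X. hinge V E X \<and> v \<in> X}"

definition max_spread :: "'a set \<Rightarrow> 'a set set \<Rightarrow> nat" where
  "max_spread V E = Max (spread V E ` V)"

definition has_parallel_hinges :: "'a set \<Rightarrow> 'a set set \<Rightarrow> 'b set \<Rightarrow> 'b set set \<Rightarrow> ('b \<Rightarrow> 'a set) \<Rightarrow> nat \<Rightarrow> bool" where
  "has_parallel_hinges V E N ET Vb n \<longleftrightarrow> (\<exists>H :: nat \<Rightarrow> 'a set.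
     (\<forall>i<n. hinge V E (H i)) \<and> (\<forall>i<n. \<forall>j<n. i \<noteq> j \<longrightarrow> H i \<inter> H j = {}) \<and>
     (\<exists>ps. is_path N ET ps \<and> (\<forall>i<n. \<exists>t\<in>set ps. H i \<subseteq> Vb t)))"

end

theory Submission
  imports Defs
begin

text \<open>Every adhesion set of Tutte's tree is a hinge: the side of the separation beyond a bond or a
  3-connected torso is 2-connected, and no two cycles are adjacent. Along a longest path of the
  tree, with D edges, an adhesion set can recur only at two consecutive edges (otherwise two
  adjacent torsos would both be bonds), so the path carries at least D/2 > 2 n \<delta> distinct
  hinges, each a pair of vertices. As every vertex lies in at most \<delta> of them, greedily picking a
  hinge and discarding the at most 2 \<delta> hinges meeting it yields n pairwise disjoint hinges, all
  contained in bags of the path.\<close>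

section \<open>Separations of 2-connected graphs\<close>

lemma sym_adj_rel: "sym (adj_rel F)"
  unfolding adj_rel_def sym_def by (simp add: insert_commute)

lemma adj_rel_rtrancl_sym: "(x,y) \<in> (adj_rel F)\<^sup>* \<Longrightarrow> (y,x) \<in> (adj_rel F)\<^sup>*"
  by (rule symD[OF sym_rtrancl[OF sym_adj_rel]])

lemma induced_mono: "W1 \<subseteq> W2 \<Longrightarrow> induced E W1 \<subseteq> induced E W2"
  unfolding induced_def by auto

lemma induced_induced: "W \<subseteq> A \<Longrightarrow> induced (induced E A) W = induced E W"
  unfolding induced_def by auto

lemma rtrancl_adj_induced_mono:
  "W1 \<subseteq> W2 \<Longrightarrow> (x,y) \<in> (adj_rel (induced E W1))\<^sup>* \<Longrightarrow> (x,y) \<in> (adj_rel (induced E W2))\<^sup>*"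
  by (rule subsetD[OF rtrancl_mono]) (auto simp: adj_rel_def dest: induced_mono)

lemma rtrancl_adj_lift:
  assumes "\<And>a b. {a,b} \<in> H \<Longrightarrow> {a,b} \<subseteq> W \<Longrightarrow> (a,b) \<in> R\<^sup>*"
    and "(x,y) \<in> (adj_rel (induced H W))\<^sup>*"
  shows "(x,y) \<in> R\<^sup>*"
proof -
  have "adj_rel (induced H W) \<subseteq> R\<^sup>*" using assms(1) unfolding adj_rel_def induced_def by auto
  then show ?thesis using assms(2) rtrancl_subset_rtrancl by blast
qed

lemma k_connected_reach:
  assumes "k_connected k V E" "S \<subseteq> V" "card S < k" "x \<in> V - S" "y \<in> V - S"
  shows "(x,y) \<in> (adj_rel (induced E (V - S)))\<^sup>*"
proof -
  have "connected_graph (V - S) (induced E (V - S))" using assms(1-3) unfolding k_connected_def by auto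
  then show ?thesis using assms(4,5) unfolding connected_graph_def by (simp add: induced_induced)
qed

lemma card_less_not_subset: "finite B \<Longrightarrow> card B < card A \<Longrightarrow> \<exists>y\<in>A. y \<notin> B"
  using card_mono by (metis not_le subsetI)

lemma card_eq_neq_not_subset: "finite B \<Longrightarrow> card A = card B \<Longrightarrow> A \<noteq> B \<Longrightarrow> \<exists>y\<in>A. y \<notin> B"
  using card_subset_eq by (metis subsetI)

lemma sep2_walk_leaves_side_through_separator:
  assumes sep: "sep2 V E A B" and EV: "\<forall>e\<in>E. e \<subseteq> V"
    and walk: "(x,y) \<in> (adj_rel (induced E W))\<^sup>*" and x: "x \<in> A - B" "x \<in> W"
  shows "(\<exists>z\<in>A\<inter>B\<inter>W. (x,z) \<in> (adj_rel (induced E (W \<inter> A)))\<^sup>*)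
    \<or> (y \<in> A - B \<and> (x,y) \<in> (adj_rel (induced E (W \<inter> A)))\<^sup>*)"
  using walk
proof (induction rule: rtrancl_induct)
  case base then show ?case using x by auto
next
  case (step y y')
  from step.hyps(2) have e: "{y,y'} \<in> E" "{y,y'} \<subseteq> W" unfolding adj_rel_def induced_def by auto
  show ?case
  proof (cases "\<exists>z\<in>A\<inter>B\<inter>W. (x,z) \<in> (adj_rel (induced E (W \<inter> A)))\<^sup>*")
    case False
    with step.IH have y: "y \<in> A - B" "(x,y) \<in> (adj_rel (induced E (W \<inter> A)))\<^sup>*" by auto
    have "y' \<in> A" using sep EV e y(1) unfolding sep2_def by blast
    then have "(y,y') \<in> adj_rel (induced E (W \<inter> A))"
      using e y unfolding adj_rel_def induced_def by auto
    with y(2) have "(x,y') \<in> (adj_rel (induced E (W \<inter> A)))\<^sup>*" by (rule rtrancl_into_rtrancl)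
    then show ?thesis using \<open>y' \<in> A\<close> e by (cases "y' \<in> B") auto
  qed blast
qed

lemma sep2_reach_separator:
  assumes G: "graph V E" "two_connected V E" and sep: "sep2 V E A B"
    and S: "S \<subseteq> V" "card S < 2" and x: "x \<in> A - S"
  shows "\<exists>z\<in>(A \<inter> B) - S. (x,z) \<in> (adj_rel (induced E (A - S)))\<^sup>*"
proof (cases "x \<in> B")
  case False
  have fV: "finite V" and EV: "\<forall>e\<in>E. e \<subseteq> V" using G(1) unfolding graph_def by auto
  have AV: "A \<subseteq> V" "B \<subseteq> V" using sep unfolding sep2_def by auto
  have "card S < card (A \<inter> B)" using sep S unfolding sep2_def by simp
  then obtain y where y: "y \<in> A \<inter> B" "y \<notin> S"
    using card_less_not_subset finite_subset[OF S(1) fV] by blast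
  have "(x,y) \<in> (adj_rel (induced E (V - S)))\<^sup>*"
    using k_connected_reach[OF G(2) S] x y AV by auto
  from sep2_walk_leaves_side_through_separator[OF sep EV this] x False AV y
  have "\<exists>z\<in>A \<inter> B \<inter> (V - S). (x,z) \<in> (adj_rel (induced E ((V - S) \<inter> A)))\<^sup>*" by auto
  moreover have "(V - S) \<inter> A = A - S" using AV by auto
  ultimately show ?thesis by auto
qed (use x in auto)

lemma sep2_separator_linked:
  assumes G: "graph V E" "two_connected V E" and sep: "sep2 V E A B"
    and X: "A \<inter> B = {u,v}" "u \<noteq> v"
  shows "(u,v) \<in> (adj_rel (induced E A))\<^sup>*"
proof -
  obtain x where x: "x \<in> A - B" using sep unfolding sep2_def by auto
  have uv: "u \<in> V" "v \<in> V" using X sep unfolding sep2_def by auto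
  from sep2_reach_separator[OF G sep, of "{u}" x] x uv X
  have "(x,v) \<in> (adj_rel (induced E (A - {u})))\<^sup>*" by auto
  then have xv: "(x,v) \<in> (adj_rel (induced E A))\<^sup>*" by (rule rtrancl_adj_induced_mono[rotated]) auto
  from sep2_reach_separator[OF G sep, of "{v}" x] x uv X
  have "(x,u) \<in> (adj_rel (induced E (A - {v})))\<^sup>*" by auto
  then have "(x,u) \<in> (adj_rel (induced E A))\<^sup>*" by (rule rtrancl_adj_induced_mono[rotated]) auto
  then show ?thesis using xv by (meson adj_rel_rtrancl_sym rtrancl_trans)
qed

text \<open>Even after deleting one vertex, every vertex of the side reaches the separator inside the
  side, so only the link between the two separator vertices has to survive the deletion.\<close>

lemma sep2_side_reach_avoiding:
  assumes G: "graph V E" "two_connected V E" and sep: "sep2 V E A B"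
    and X: "A \<inter> B = {u,v}" "u \<noteq> v"
    and linked: "\<forall>w\<in>A - {u,v}. (u,v) \<in> (adj_rel (induced E (A - {w})))\<^sup>*"
    and S: "S \<subseteq> A" "card S < 2" and xy: "x \<in> A - S" "y \<in> A - S"
  shows "(x,y) \<in> (adj_rel (induced E (A - S)))\<^sup>*"
proof -
  let ?R = "adj_rel (induced E (A - S))"
  have SV: "S \<subseteq> V" using S sep unfolding sep2_def by auto
  have uv: "(u,v) \<in> ?R\<^sup>*" if "S \<inter> {u,v} = {}"
  proof (cases "S = {}")
    case True then show ?thesis using sep2_separator_linked[OF G sep X] by simp
  next
    case False
    then have "card S \<noteq> 0" using finite_subset[OF SV] G(1) unfolding graph_def by simp
    then have "card S = Suc 0" using S(2) by simp
    then obtain w where "S = {w}" by (auto simp: card_Suc_eq)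
    then show ?thesis using linked S(1) that by auto
  qed
  have sep_linked: "(z1,z2) \<in> ?R\<^sup>*" if "z1 \<in> {u,v} - S" "z2 \<in> {u,v} - S" for z1 z2
  proof (cases "z1 = z2")
    case False
    with that consider "z1 = u" "z2 = v" | "z1 = v" "z2 = u" by blast
    then show ?thesis
    proof cases
      case 1 then show ?thesis using that uv by auto
    next
      case 2 then show ?thesis using that adj_rel_rtrancl_sym[OF uv] by auto
    qed
  qed simp
  obtain zx where zx: "zx \<in> {u,v} - S" "(x,zx) \<in> ?R\<^sup>*"
    using sep2_reach_separator[OF G sep SV S(2) xy(1)] X by auto
  obtain zy where zy: "zy \<in> {u,v} - S" "(y,zy) \<in> ?R\<^sup>*"
    using sep2_reach_separator[OF G sep SV S(2) xy(2)] X by auto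
  show ?thesis using zx zy sep_linked[OF zx(1) zy(1)]
    by (meson adj_rel_rtrancl_sym rtrancl_trans)
qed

lemma sep2_side_two_connected:
  assumes G: "graph V E" "two_connected V E" and sep: "sep2 V E A B"
    and X: "A \<inter> B = {u,v}" "u \<noteq> v"
    and linked: "\<forall>w\<in>A - {u,v}. (u,v) \<in> (adj_rel (induced E (A - {w})))\<^sup>*"
  shows "two_connected A (induced E A)"
proof -
  have fA: "finite A" using G(1) sep finite_subset unfolding graph_def sep2_def by blast
  obtain x0 where x0: "x0 \<in> A - B" using sep unfolding sep2_def by auto
  have "x0 \<noteq> u" "x0 \<noteq> v" using X(1) x0 by auto
  then have "card {u,v,x0} = 3" using X(2) by simp
  moreover have "card {u,v,x0} \<le> card A" using X(1) x0 by (intro card_mono[OF fA]) auto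
  ultimately have cA: "card A > 2" by simp
  have "connected_graph (A - S) (induced (induced E A) (A - S))" if S: "S \<subseteq> A" "card S < 2" for S
  proof -
    have "card S < card A" using S(2) cA by simp
    then have "A - S \<noteq> {}" using card_less_not_subset[OF finite_subset[OF S(1) fA]] by blast
    then show ?thesis unfolding connected_graph_def
      using sep2_side_reach_avoiding[OF G sep X linked S] by (simp add: induced_induced Diff_subset)
  qed
  then show ?thesis unfolding k_connected_def using fA cA by auto
qed

section \<open>Paths and trees\<close>

fun edge_path :: "'b set set \<Rightarrow> 'b list \<Rightarrow> bool" where
  "edge_path F [] = False"
| "edge_path F [x] = True"
| "edge_path F (x # y # zs) \<longleftrightarrow> {x,y} \<in> F \<and> edge_path F (y # zs)"

lemma edge_path_not_Nil: "edge_path F ps \<Longrightarrow> ps \<noteq> []"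
  by (cases ps) auto

lemma edge_path_Cons: "ps \<noteq> [] \<Longrightarrow> edge_path F (x # ps) \<longleftrightarrow> {x, hd ps} \<in> F \<and> edge_path F ps"
  by (cases ps) auto

lemma edge_path_append:
  "edge_path F xs \<Longrightarrow> edge_path F ys \<Longrightarrow> {last xs, hd ys} \<in> F \<Longrightarrow> edge_path F (xs @ ys)"
proof (induction F xs rule: edge_path.induct)
  case (2 F x) then show ?case using edge_path_not_Nil[of F ys] by (simp add: edge_path_Cons)
qed auto

lemma edge_path_appendD: "edge_path F (xs @ ys) \<Longrightarrow> ys \<noteq> [] \<Longrightarrow> edge_path F ys"
  by (induction xs) (auto simp: edge_path_Cons)

lemma edge_path_mono: "edge_path F ps \<Longrightarrow> F \<subseteq> G \<Longrightarrow> edge_path G ps"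
  by (induction F ps rule: edge_path.induct) auto

lemma edge_path_nth: "edge_path F ps \<Longrightarrow> Suc i < length ps \<Longrightarrow> {ps!i, ps!Suc i} \<in> F"
proof (induction F ps arbitrary: i rule: edge_path.induct)
  case (3 F x y zs) then show ?case by (cases i) auto
qed auto

lemma edge_path_rtrancl: "edge_path F ps \<Longrightarrow> (hd ps, last ps) \<in> (adj_rel F)\<^sup>*"
proof (induction F ps rule: edge_path.induct)
  case (3 F x y zs)
  then have "(x,y) \<in> adj_rel F" by (simp add: adj_rel_def)
  then show ?case using 3 by (simp add: converse_rtrancl_into_rtrancl)
qed auto

lemma edge_path_avoid: "edge_path F ps \<Longrightarrow> a \<notin> set ps \<Longrightarrow> a \<in> e \<Longrightarrow> edge_path (F - {e}) ps"
  by (induction F ps rule: edge_path.induct) auto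

lemma edge_path_is_path:
  assumes "edge_path F ps" "distinct ps" "set ps \<subseteq> N" "F \<subseteq> ET"
  shows "is_path N ET ps"
  using assms edge_path_nth[OF assms(1)] edge_path_not_Nil[OF assms(1)]
  unfolding is_path_def by blast

lemma rtrancl_adj_edge_path:
  assumes "(x,y) \<in> (adj_rel F)\<^sup>*"
  shows "\<exists>ps. edge_path F ps \<and> distinct ps \<and> hd ps = x \<and> last ps = y
    \<and> set ps \<subseteq> {z. (x,z) \<in> (adj_rel F)\<^sup>*}"
  using assms
proof (induction rule: converse_rtrancl_induct)
  case base then show ?case by (intro exI[of _ "[y]"]) auto
next
  case (step x x')
  then obtain ps where ps: "edge_path F ps" "distinct ps" "hd ps = x'" "last ps = y"
    "set ps \<subseteq> {z. (x',z) \<in> (adj_rel F)\<^sup>*}" by auto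
  have xx': "{x,x'} \<in> F" using step.hyps(1) by (simp add: adj_rel_def)
  have reach: "set ps \<subseteq> {z. (x,z) \<in> (adj_rel F)\<^sup>*}"
    using ps(5) step.hyps(1) by (auto intro: converse_rtrancl_into_rtrancl)
  show ?case
  proof (cases "x \<in> set ps")
    case True
    then obtain as bs where sp: "ps = as @ x # bs" using split_list by metis
    have "edge_path F (x # bs)" using edge_path_appendD[of F as] ps(1) sp by simp
    then show ?thesis using ps(2,4) reach sp by (intro exI[of _ "x # bs"]) auto
  next
    case False
    have "ps \<noteq> []" using edge_path_not_Nil ps(1) by blast
    then show ?thesis using ps xx' reach False by (intro exI[of _ "x # ps"]) (auto simp: edge_path_Cons)
  qed
qed

text \<open>Choosing for each vertex other than r a neighbour strictly closer to r injects the other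
  vertices into the edges.\<close>

lemma connected_card_le_edges:
  assumes fin: "finite N" and FN: "\<forall>e\<in>F. e \<subseteq> N" and r: "r \<in> N"
    and conn: "\<forall>x\<in>N. (x,r) \<in> (adj_rel F)\<^sup>*"
  shows "card N \<le> card F + 1"
proof -
  define d where "d x = (LEAST k. (x,r) \<in> (adj_rel F) ^^ k)" for x
  have dk: "(x,r) \<in> (adj_rel F) ^^ d x" if "x \<in> N" for x
    unfolding d_def by (rule LeastI_ex) (use rtrancl_imp_relpow conn that in blast)
  have "\<exists>p. {x,p} \<in> F \<and> d p < d x" if x: "x \<in> N - {r}" for x
  proof -
    obtain m where m: "d x = Suc m"
      using dk[of x] x by (cases "d x") auto
    then obtain p where p: "(x,p) \<in> adj_rel F" "(p,r) \<in> (adj_rel F)^^m"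
      using dk[of x] x relpow_Suc_D2 by fastforce
    have "d p \<le> m" unfolding d_def using p(2) by (rule Least_le)
    then show ?thesis using p(1) m by (auto simp: adj_rel_def)
  qed
  then obtain pa where pa: "\<forall>x \<in> N - {r}. {x, pa x} \<in> F \<and> d (pa x) < d x"
    by metis
  have "inj_on (\<lambda>x. {x, pa x}) (N - {r})"
  proof (rule inj_onI)
    fix x y assume xy: "x \<in> N - {r}" "y \<in> N - {r}" "{x, pa x} = {y, pa y}"
    show "x = y"
    proof (rule ccontr)
      assume "x \<noteq> y"
      then have "x = pa y \<and> pa x = y" using xy(3) by (auto simp: doubleton_eq_iff)
      moreover have "d (pa x) < d x" "d (pa y) < d y" using pa xy(1,2) by auto
      ultimately show False by auto
    qed
  qed
  moreover have "(\<lambda>x. {x, pa x}) ` (N - {r}) \<subseteq> F" using pa by auto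
  moreover have "finite F" using FN fin by (meson Pow_iff finite_Pow_iff finite_subset subsetI)
  ultimately have "card (N - {r}) \<le> card F" by (rule card_inj_on_le)
  then show ?thesis using r fin by simp
qed

lemma is_path_edge: "is_path N ET ps \<Longrightarrow> Suc i < length ps \<Longrightarrow> {ps!i, ps!Suc i} \<in> ET"
  unfolding is_path_def by blast

lemma is_path_segment:
  assumes p: "is_path N ET ps" and ij: "i \<le> j" "j < length ps"
  shows "is_path N ET (take (Suc j - i) (drop i ps))" (is "is_path N ET ?qs")
  unfolding is_path_def
proof (intro conjI allI impI)
  show "?qs \<noteq> []" using ij by simp
  show "distinct ?qs" using p unfolding is_path_def by simp
  have "set ?qs \<subseteq> set ps" by (meson set_drop_subset set_take_subset subset_trans)
  then show "set ?qs \<subseteq> N" using p unfolding is_path_def by blast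
next
  fix m assume m: "Suc m < length ?qs"
  then have "?qs ! m = ps ! (i + m)" "?qs ! Suc m = ps ! Suc (i + m)" "Suc (i + m) < length ps"
    using ij by simp_all
  then show "{?qs ! m, ?qs ! Suc m} \<in> ET" using is_path_edge[OF p] by simp
qed

locale finite_tree =
  fixes N :: "'b set" and ET :: "'b set set"
  assumes tree: "tree N ET"
begin

lemma finite_nodes: "finite N"
  using tree unfolding tree_def graph_def by auto

lemma edge_subset_nodes: "e \<in> ET \<Longrightarrow> e \<subseteq> N"
  using tree unfolding tree_def graph_def by auto

lemma edge_nodes: "{t,t'} \<in> ET \<Longrightarrow> t \<in> N \<and> t' \<in> N"
  using edge_subset_nodes by blast

lemma finite_edges: "finite ET"
  using finite_nodes edge_subset_nodes by (meson Pow_iff finite_Pow_iff finite_subset subsetI)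

lemma nodes_connected: "x \<in> N \<Longrightarrow> y \<in> N \<Longrightarrow> (x,y) \<in> (adj_rel ET)\<^sup>*"
proof -
  have "induced ET N = ET" using edge_subset_nodes unfolding induced_def by auto
  then show "x \<in> N \<Longrightarrow> y \<in> N \<Longrightarrow> (x,y) \<in> (adj_rel ET)\<^sup>*"
    using tree unfolding tree_def connected_graph_def by auto
qed

lemma path_exists:
  assumes "s \<in> N" "t \<in> N"
  shows "\<exists>ps. is_path N ET ps \<and> hd ps = s \<and> last ps = t"
proof -
  obtain ps where ps: "edge_path ET ps" "distinct ps" "hd ps = s" "last ps = t"
    "set ps \<subseteq> {z. (s,z) \<in> (adj_rel ET)\<^sup>*}"
    using rtrancl_adj_edge_path[OF nodes_connected[OF assms]] by blast
  have "set ps \<subseteq> N"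
  proof
    fix z assume "z \<in> set ps"
    then have "(s,z) \<in> (adj_rel ET)\<^sup>*" using ps(5) by blast
    then show "z \<in> N"
      by (induction rule: rtrancl_induct) (use assms(1) edge_subset_nodes in \<open>auto simp: adj_rel_def\<close>)
  qed
  then show ?thesis using edge_path_is_path[OF ps(1,2)] ps(3,4) by blast
qed

definition branch :: "'b \<Rightarrow> 'b \<Rightarrow> 'b set" where
  "branch t t' = {r. (t,r) \<in> (adj_rel (ET - {{t,t'}}))\<^sup>*}"

lemma branch_self: "t \<in> branch t t'"
  unfolding branch_def by simp

lemma branch_step: "r \<in> branch t t' \<Longrightarrow> {r,z} \<in> ET \<Longrightarrow> {r,z} \<noteq> {t,t'} \<Longrightarrow> z \<in> branch t t'"
  unfolding branch_def by (auto simp: adj_rel_def intro: rtrancl_into_rtrancl)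

lemma branch_subset_nodes: "t \<in> N \<Longrightarrow> branch t t' \<subseteq> N"
proof
  fix r assume t: "t \<in> N" and "r \<in> branch t t'"
  then have "(t,r) \<in> (adj_rel (ET - {{t,t'}}))\<^sup>*" by (simp add: branch_def)
  then show "r \<in> N"
    by (induction rule: rtrancl_induct) (use t edge_subset_nodes in \<open>auto simp: adj_rel_def\<close>)
qed

text \<open>If t' were still reachable, ET minus an edge would connect N, which the edge count of a
  tree forbids.\<close>

lemma neighbour_not_in_branch:
  assumes e: "{t,t'} \<in> ET" shows "t' \<notin> branch t t'"
proof
  assume "t' \<in> branch t t'"
  let ?F = "ET - {{t,t'}}"
  have tt: "(t,t') \<in> (adj_rel ?F)\<^sup>*" using \<open>t' \<in> branch t t'\<close> by (simp add: branch_def)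
  have "adj_rel ET \<subseteq> (adj_rel ?F)\<^sup>*"
  proof
    fix p assume "p \<in> adj_rel ET"
    then obtain a b where p: "p = (a,b)" "{a,b} \<in> ET" by (auto simp: adj_rel_def)
    show "p \<in> (adj_rel ?F)\<^sup>*"
    proof (cases "{a,b} = {t,t'}")
      case True
      then have "(a = t \<and> b = t') \<or> (a = t' \<and> b = t)" by (auto simp: doubleton_eq_iff)
      then show ?thesis using tt adj_rel_rtrancl_sym[OF tt] p by auto
    qed (use p in \<open>auto simp: adj_rel_def\<close>)
  qed
  then have sub: "(adj_rel ET)\<^sup>* \<subseteq> (adj_rel ?F)\<^sup>*" by (rule rtrancl_subset_rtrancl)
  have tN: "t \<in> N" using edge_nodes[OF e] by simp
  have "card N \<le> card ?F + 1"
    using connected_card_le_edges[OF finite_nodes _ tN] edge_subset_nodes nodes_connected tN sub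
    by blast
  moreover have "card ?F + 1 = card ET"
    using card.remove[OF finite_edges e] by simp
  ultimately show False using tree unfolding tree_def by simp
qed

lemma branch_cover:
  assumes e: "{t,t'} \<in> ET" and r: "r \<in> N"
  shows "r \<in> branch t t' \<or> r \<in> branch t' t"
proof -
  have "(t,r) \<in> (adj_rel ET)\<^sup>*" using nodes_connected edge_nodes[OF e] r by simp
  then show ?thesis
  proof (induction rule: rtrancl_induct)
    case base then show ?case using branch_self by auto
  next
    case (step y z)
    then have yz: "{y,z} \<in> ET" by (simp add: adj_rel_def)
    show ?case
    proof (cases "{y,z} = {t,t'}")
      case True
      then have "z = t \<or> z = t'" by (auto simp: doubleton_eq_iff)
      then show ?thesis using branch_self by auto
    next
      case False
      then have "{y,z} \<noteq> {t',t}" by (simp add: insert_commute)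
      then show ?thesis using step.IH branch_step[OF _ yz] False by blast
    qed
  qed
qed

lemma branch_disjoint:
  assumes e: "{t,t'} \<in> ET" and r: "r \<in> branch t t'" "r \<in> branch t' t"
  shows False
proof -
  let ?R = "adj_rel (ET - {{t,t'}})"
  have "(t,r) \<in> ?R\<^sup>*" "(t',r) \<in> ?R\<^sup>*" using r by (simp_all add: branch_def insert_commute)
  then have "(t,t') \<in> ?R\<^sup>*" by (meson adj_rel_rtrancl_sym rtrancl_trans)
  then show False using neighbour_not_in_branch[OF e] by (simp add: branch_def)
qed

lemma path_across_edge:
  assumes e: "{t,t'} \<in> ET" and r: "r1 \<in> branch t t'" "r2 \<in> branch t' t"
  shows "\<exists>ps. is_path N ET ps \<and> hd ps = r1 \<and> last ps = r2 \<and> t \<in> set ps \<and> t' \<in> set ps"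
proof -
  let ?F = "ET - {{t,t'}}"
  have tN: "t \<in> N" "t' \<in> N" using edge_nodes[OF e] by auto
  have 1: "(t,r1) \<in> (adj_rel ?F)\<^sup>*" using r(1) by (simp add: branch_def)
  have 2: "(t',r2) \<in> (adj_rel ?F)\<^sup>*" using r(2) by (simp add: branch_def insert_commute)
  obtain p1 where p1: "edge_path ?F p1" "distinct p1" "hd p1 = r1" "last p1 = t"
    "set p1 \<subseteq> {z. (r1,z) \<in> (adj_rel ?F)\<^sup>*}"
    using rtrancl_adj_edge_path[OF adj_rel_rtrancl_sym[OF 1]] by blast
  obtain p2 where p2: "edge_path ?F p2" "distinct p2" "hd p2 = t'" "last p2 = r2"
    "set p2 \<subseteq> {z. (t',z) \<in> (adj_rel ?F)\<^sup>*}"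
    using rtrancl_adj_edge_path[OF 2] by blast
  have s1: "set p1 \<subseteq> branch t t'" using p1(5) 1 unfolding branch_def by (auto intro: rtrancl_trans)
  have s2: "set p2 \<subseteq> branch t' t" using p2(5) unfolding branch_def by (auto simp: insert_commute)
  have ne: "p1 \<noteq> []" "p2 \<noteq> []" using p1(1) p2(1) edge_path_not_Nil by blast+
  have "edge_path ET (p1 @ p2)"
    by (intro edge_path_append edge_path_mono[OF p1(1)] edge_path_mono[OF p2(1)])
      (use p1(4) p2(3) e in auto)
  moreover have "distinct (p1 @ p2)" using p1(2) p2(2) s1 s2 branch_disjoint[OF e] by auto
  moreover have "set (p1 @ p2) \<subseteq> N"
    using s1 s2 branch_subset_nodes[OF tN(1), of t'] branch_subset_nodes[OF tN(2), of t] by auto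
  ultimately have "is_path N ET (p1 @ p2)" by (rule edge_path_is_path) simp
  moreover have "t \<in> set p1" "t' \<in> set p2" using ne p1(4) p2(3) by auto
  ultimately show ?thesis using ne p1(3) p2(4) by auto
qed

lemma branch_nested:
  assumes e1: "{s,t'} \<in> ET" and e2: "{s,t''} \<in> ET" and ne: "t'' \<noteq> t'"
  shows "branch t'' s \<subseteq> branch s t'"
proof
  fix r assume "r \<in> branch t'' s"
  then have "(t'',r) \<in> (adj_rel (ET - {{t'',s}}))\<^sup>*" by (simp add: branch_def)
  then show "r \<in> branch s t'"
  proof (induction rule: rtrancl_induct)
    case base
    have "{s,t''} \<noteq> {s,t'}" using ne by (auto simp: doubleton_eq_iff)
    then show ?case using branch_step[OF branch_self e2] by simp
  next
    case (step y z)
    have yz: "{y,z} \<in> ET" using step.hyps(2) by (simp add: adj_rel_def)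
    have "y \<in> branch t'' s" using step.hyps(1) by (simp add: branch_def)
    then have "y \<noteq> s" using neighbour_not_in_branch[of t'' s] e2 by (auto simp: insert_commute)
    moreover have "y \<noteq> t'" using step.IH neighbour_not_in_branch[OF e1] by auto
    ultimately have "{y,z} \<noteq> {s,t'}" by (auto simp: doubleton_eq_iff)
    then show ?case using branch_step[OF step.IH yz] by simp
  qed
qed

lemma branch_through_neighbour:
  assumes e: "{s,t'} \<in> ET" and r: "r \<in> branch s t'" "r \<noteq> s"
  shows "\<exists>t''. {s,t''} \<in> ET \<and> t'' \<noteq> t' \<and> r \<in> branch t'' s"
proof -
  let ?F = "ET - {{s,t'}}"
  have "(s,r) \<in> (adj_rel ?F)\<^sup>*" using r(1) by (simp add: branch_def)
  then obtain ps where ps: "edge_path ?F ps" "distinct ps" "hd ps = s" "last ps = r"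
    by (blast dest: rtrancl_adj_edge_path)
  obtain t'' rest where sp: "ps = s # t'' # rest"
  proof (cases ps rule: remdups_adj.cases)
    case (2 x) then show ?thesis using ps(3,4) r(2) by simp
  next
    case (3 x y xs) then show ?thesis using ps(3) that by simp
  qed (use ps(1) in simp)
  have st: "{s,t''} \<in> ?F" using ps(1) sp by simp
  have "edge_path ?F (t'' # rest)" "s \<notin> set (t'' # rest)" using ps(1,2) sp by auto
  then have "edge_path (?F - {{t'',s}}) (t'' # rest)" by (rule edge_path_avoid) simp
  then have "edge_path (ET - {{t'',s}}) (t'' # rest)" by (rule edge_path_mono) auto
  from edge_path_rtrancl[OF this] have "r \<in> branch t'' s"
    using ps(4) sp by (simp add: branch_def)
  moreover have "t'' \<noteq> t'" using st by auto
  ultimately show ?thesis using st by auto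
qed

lemma diameter_path: "\<exists>ps. is_path N ET ps \<and> length ps = Suc (diameter N ET)"
proof -
  let ?D = "{tree_dist N ET s t | s t. s \<in> N \<and> t \<in> N}"
  have "?D = (\<lambda>(s,t). tree_dist N ET s t) ` (N \<times> N)" by auto
  then have "finite ?D" using finite_nodes by simp
  moreover obtain r where "r \<in> N" using tree unfolding tree_def connected_graph_def by auto
  then have "?D \<noteq> {}" by blast
  ultimately have "diameter N ET \<in> ?D" unfolding diameter_def by (rule Max_in)
  then obtain s t where st: "s \<in> N" "t \<in> N" "diameter N ET = tree_dist N ET s t" by auto
  obtain ps where "is_path N ET ps" "hd ps = s" "last ps = t" using path_exists[OF st(1,2)] by blast
  then have "\<exists>k ps. is_path N ET ps \<and> hd ps = s \<and> last ps = t \<and> length ps = Suc k"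
    unfolding is_path_def by (metis length_greater_0_conv Suc_pred)
  from LeastI_ex[OF this] show ?thesis unfolding st(3) tree_dist_def by blast
qed

end

section \<open>Tree decompositions\<close>

locale tree_decomp =
  fixes V :: "'a set" and E :: "'a set set" and N :: "'b set" and ET :: "'b set set"
    and Vb :: "'b \<Rightarrow> 'a set"
  assumes decomp: "tree_decomposition V E N ET Vb"
begin

sublocale finite_tree N ET
  using decomp unfolding tree_decomposition_def by unfold_locales blast

lemma bag_subset: "t \<in> N \<Longrightarrow> Vb t \<subseteq> V"
  using decomp unfolding tree_decomposition_def by auto

lemma bags_cover: "x \<in> V \<Longrightarrow> \<exists>t\<in>N. x \<in> Vb t"
  using decomp unfolding tree_decomposition_def by auto

lemma edge_in_bag: "e \<in> E \<Longrightarrow> \<exists>t\<in>N. e \<subseteq> Vb t"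
  using decomp unfolding tree_decomposition_def by auto

lemma path_bags: "is_path N ET ps \<Longrightarrow> t \<in> set ps \<Longrightarrow> Vb (hd ps) \<inter> Vb (last ps) \<subseteq> Vb t"
  using decomp unfolding tree_decomposition_def by blast

lemma path_bags_nth:
  assumes p: "is_path N ET ps" and ikj: "i \<le> k" "k \<le> j" "j < length ps"
  shows "Vb (ps!i) \<inter> Vb (ps!j) \<subseteq> Vb (ps!k)"
proof -
  let ?qs = "take (Suc j - i) (drop i ps)"
  have "?qs \<noteq> []" using ikj by simp
  then have "hd ?qs = ps ! i" "last ?qs = ps ! j" using ikj by (simp_all add: hd_conv_nth last_conv_nth)
  moreover have "?qs ! (k - i) = ps ! k" "k - i < length ?qs" using ikj by auto
  then have "ps ! k \<in> set ?qs" by (metis nth_mem)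
  ultimately show ?thesis using path_bags[OF is_path_segment[OF p, of i j]] ikj by simp
qed

definition side :: "'b \<Rightarrow> 'b \<Rightarrow> 'a set" where
  "side t t' = (\<Union>r\<in>branch t t'. Vb r)"

lemma bag_subset_side: "Vb t \<subseteq> side t t'"
  unfolding side_def using branch_self by blast

lemma bags_across_edge:
  assumes e: "{t,t'} \<in> ET" and r: "r1 \<in> branch t t'" "r2 \<in> branch t' t"
  shows "Vb r1 \<inter> Vb r2 \<subseteq> Vb t \<inter> Vb t'"
proof -
  obtain ps where "is_path N ET ps" "hd ps = r1" "last ps = r2" "t \<in> set ps" "t' \<in> set ps"
    using path_across_edge[OF e r] by blast
  then show ?thesis using path_bags[of ps t] path_bags[of ps t'] by blast
qed

lemma side_inter:
  assumes e: "{t,t'} \<in> ET"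
  shows "side t t' \<inter> side t' t = Vb t \<inter> Vb t'"
proof
  show "side t t' \<inter> side t' t \<subseteq> Vb t \<inter> Vb t'"
    unfolding side_def using bags_across_edge[OF e] by blast
qed (use bag_subset_side in blast)

lemma side_union:
  assumes e: "{t,t'} \<in> ET"
  shows "side t t' \<union> side t' t = V"
proof
  have "branch t t' \<subseteq> N" "branch t' t \<subseteq> N" using branch_subset_nodes edge_nodes[OF e] by auto
  then show "side t t' \<union> side t' t \<subseteq> V" unfolding side_def using bag_subset by blast
  show "V \<subseteq> side t t' \<union> side t' t"
  proof
    fix x assume "x \<in> V"
    then obtain r where "r \<in> N" "x \<in> Vb r" using bags_cover by blast
    then show "x \<in> side t t' \<union> side t' t" using branch_cover[OF e] unfolding side_def by blast
  qed
qed

lemma side_no_cross_edge: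
  assumes e: "{t,t'} \<in> ET" and x: "x \<in> side t t' - side t' t" and y: "y \<in> side t' t - side t t'"
  shows "{x,y} \<notin> E"
proof
  assume "{x,y} \<in> E"
  then obtain r where "r \<in> N" "{x,y} \<subseteq> Vb r" using edge_in_bag by blast
  then show False using branch_cover[OF e] x y unfolding side_def by blast
qed

lemma side_nested:
  assumes "{s,t'} \<in> ET" "{s,t''} \<in> ET" "t'' \<noteq> t'"
  shows "side t'' s \<subseteq> side s t'"
  unfolding side_def using branch_nested[OF assms] by blast

lemma sides_inter_subset_bag:
  assumes e1: "{s,t1} \<in> ET" and e2: "{s,t2} \<in> ET" and ne: "t1 \<noteq> t2"
  shows "side t1 s \<inter> side t2 s \<subseteq> Vb s"
proof
  fix x assume "x \<in> side t1 s \<inter> side t2 s"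
  then obtain r1 r2 where r: "r1 \<in> branch t1 s" "r2 \<in> branch t2 s" "x \<in> Vb r1" "x \<in> Vb r2"
    unfolding side_def by blast
  have "r2 \<in> branch s t1" using branch_nested[OF e1 e2 ne[symmetric]] r(2) by blast
  moreover have "{t1,s} \<in> ET" using e1 by (simp add: insert_commute)
  ultimately show "x \<in> Vb s" using bags_across_edge[of t1 s r1 r2] r by blast
qed

lemma side_inter_bag:
  assumes e: "{s,t''} \<in> ET"
  shows "side t'' s \<inter> Vb s \<subseteq> Vb s \<inter> Vb t''"
proof
  fix x assume x: "x \<in> side t'' s \<inter> Vb s"
  then obtain r where r: "r \<in> branch t'' s" "x \<in> Vb r" unfolding side_def by blast
  have "{t'',s} \<in> ET" using e by (simp add: insert_commute)
  from bags_across_edge[OF this r(1) branch_self] show "x \<in> Vb s \<inter> Vb t''" using x r by blast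
qed

end

section \<open>Adhesion sets of the Tutte decomposition are hinges\<close>

locale tutte_decomp = tree_decomp V E N ET Vb
  for V :: "'a set" and E :: "'a set set" and N :: "'b set" and ET :: "'b set set"
    and Vb :: "'b \<Rightarrow> 'a set" +
  fixes beta :: "'a set \<Rightarrow> 'b"
  assumes graph: "graph V E" and two_conn: "two_connected V E"
    and card_adhesion: "{t,t'} \<in> ET \<Longrightarrow> card (Vb t \<inter> Vb t') = 2"
    and torso_cases: "t \<in> N \<Longrightarrow> is_bond E ET Vb beta t \<or> is_cycle_torso E ET Vb beta t
      \<or> is_3conn_torso E ET Vb beta t"
    and no_adjacent_bonds: "{t,t'} \<in> ET \<Longrightarrow> \<not> (is_bond E ET Vb beta t \<and> is_bond E ET Vb beta t')"
    and no_adjacent_cycles: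
      "{t,t'} \<in> ET \<Longrightarrow> \<not> (is_cycle_torso E ET Vb beta t \<and> is_cycle_torso E ET Vb beta t')"
begin

abbreviation "bond \<equiv> is_bond E ET Vb beta"
abbreviation "cycle \<equiv> is_cycle_torso E ET Vb beta"
abbreviation "three_conn \<equiv> is_3conn_torso E ET Vb beta"
abbreviation "mult \<equiv> torso_mult E ET Vb beta"

definition virtual_edges :: "'b \<Rightarrow> 'a set \<Rightarrow> 'b set" where
  "virtual_edges t p = {t'. {t,t'} \<in> ET \<and> Vb t \<inter> Vb t' = p}"

lemma torso_mult_eq: "mult t p = card (virtual_edges t p) + (if p \<in> E \<and> beta p = t then 1 else 0)"
  by (simp only: torso_mult_def virtual_edges_def)

lemma finite_virtual_edges: "finite (virtual_edges t p)"
proof -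
  have "virtual_edges t p \<subseteq> N" unfolding virtual_edges_def using edge_nodes by blast
  then show ?thesis using finite_nodes finite_subset by blast
qed

lemma finite_vertices: "finite V"
  using graph unfolding graph_def by blast

lemma finite_bag: "t \<in> N \<Longrightarrow> finite (Vb t)"
  using bag_subset finite_vertices finite_subset by blast

lemma torso_edge_cases:
  assumes "p \<in> torso_edges E ET Vb beta s"
  shows "(p \<in> E \<and> beta p = s) \<or> (\<exists>t''. {s,t''} \<in> ET \<and> Vb s \<inter> Vb t'' = p)"
proof -
  have "mult s p \<ge> 1" using assms unfolding torso_edges_def by simp
  then have "(p \<in> E \<and> beta p = s) \<or> virtual_edges s p \<noteq> {}"
    unfolding torso_mult_eq by (auto split: if_splits)
  then show ?thesis unfolding virtual_edges_def by blast
qed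

lemma not_torso_simple_if_same_adhesion:
  assumes e1: "{t,t1} \<in> ET" "Vb t \<inter> Vb t1 = p"
    and e2: "{t,t2} \<in> ET" "Vb t \<inter> Vb t2 = p" and ne: "t1 \<noteq> t2"
  shows "\<not> torso_simple E ET Vb beta t"
proof -
  have "{t1,t2} \<subseteq> virtual_edges t p" using e1 e2 unfolding virtual_edges_def by auto
  then have "card {t1,t2} \<le> card (virtual_edges t p)" by (rule card_mono[OF finite_virtual_edges])
  then have "Suc 1 \<le> mult t p" using ne unfolding torso_mult_eq by simp
  then show ?thesis unfolding torso_simple_def using not_less_eq_eq by blast
qed

lemma bond_if_same_adhesion:
  assumes "t \<in> N" "{t,t1} \<in> ET" "Vb t \<inter> Vb t1 = p" "{t,t2} \<in> ET" "Vb t \<inter> Vb t2 = p" "t1 \<noteq> t2"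
  shows "bond t"
  using not_torso_simple_if_same_adhesion[OF assms(2-)] torso_cases[OF assms(1)]
  unfolding is_3conn_torso_def is_cycle_torso_def by blast

lemma card_bag_ge_3_if_not_bond:
  assumes "t \<in> N" "\<not> bond t" shows "card (Vb t) \<ge> 3"
proof -
  have "cycle t \<or> three_conn t" using torso_cases assms by blast
  then show ?thesis
  proof
    assume "three_conn t"
    then have "card (Vb t) > 3" unfolding is_3conn_torso_def k_connected_def by blast
    then show ?thesis by simp
  qed (simp add: is_cycle_torso_def cycle_graph_def)
qed

lemma bond_bag_eq_adhesion:
  assumes b: "bond s" and e: "{s,t'} \<in> ET"
  shows "Vb s \<inter> Vb t' = Vb s"
proof -
  have "card (Vb s \<inter> Vb t') = card (Vb s)" using card_adhesion[OF e] b unfolding is_bond_def by simp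
  then show ?thesis using finite_bag edge_nodes[OF e] card_subset_eq[of "Vb s" "Vb s \<inter> Vb t'"] by blast
qed

lemma bond_virtual_edges:
  assumes b: "bond s" and e: "{s,t'} \<in> ET"
  shows "card (virtual_edges s (Vb s \<inter> Vb t')) \<ge> 2"
  using b bond_bag_eq_adhesion[OF b e] unfolding is_bond_def torso_mult_eq by (auto split: if_splits)

text \<open>A bond has a second neighbour, which is not a bond and so supplies a vertex off the
  adhesion set.\<close>

lemma side_minus_adhesion_nonempty:
  assumes e: "{t,t'} \<in> ET" shows "\<exists>y \<in> side t t'. y \<notin> Vb t \<inter> Vb t'"
proof (cases "bond t")
  case False
  have "card (Vb t \<inter> Vb t') < card (Vb t)"
    using card_bag_ge_3_if_not_bond[OF _ False] edge_nodes[OF e] card_adhesion[OF e] by simp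
  moreover have "finite (Vb t \<inter> Vb t')" using finite_bag edge_nodes[OF e] by blast
  ultimately obtain y where "y \<in> Vb t" "y \<notin> Vb t \<inter> Vb t'" using card_less_not_subset by blast
  then show ?thesis using bag_subset_side by blast
next
  case True
  have "card {t'} < card (virtual_edges t (Vb t \<inter> Vb t'))" using bond_virtual_edges[OF True e] by simp
  then obtain t2 where "t2 \<in> virtual_edges t (Vb t \<inter> Vb t')" "t2 \<notin> {t'}"
    using card_less_not_subset[of "{t'}"] by blast
  then have t2: "{t,t2} \<in> ET" "t2 \<noteq> t'" unfolding virtual_edges_def by auto
  have "\<not> bond t2" using no_adjacent_bonds[OF t2(1)] True by blast
  then have "card (Vb t \<inter> Vb t') < card (Vb t2)"
    using card_bag_ge_3_if_not_bond[of t2] edge_nodes[OF t2(1)] card_adhesion[OF e] by simp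
  moreover have "finite (Vb t \<inter> Vb t')" using finite_bag edge_nodes[OF e] by blast
  ultimately obtain y where y: "y \<in> Vb t2" "y \<notin> Vb t \<inter> Vb t'" using card_less_not_subset by blast
  have "{t,t2} \<noteq> {t,t'}" using t2(2) by (auto simp: doubleton_eq_iff)
  then have "t2 \<in> branch t t'" using branch_step[OF branch_self t2(1)] by simp
  then show ?thesis using y unfolding side_def by blast
qed

lemma sep2_sides:
  assumes e: "{t,t'} \<in> ET" shows "sep2 V E (side t t') (side t' t)"
proof -
  have e': "{t',t} \<in> ET" using e by (simp add: insert_commute)
  have "side t t' - side t' t \<noteq> {}"
    using side_minus_adhesion_nonempty[OF e] side_inter[OF e] by blast
  moreover have "side t' t - side t t' \<noteq> {}"
    using side_minus_adhesion_nonempty[OF e'] side_inter[OF e'] by blast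
  moreover have "\<not> (\<exists>x\<in>side t t' - side t' t. \<exists>y\<in>side t' t - side t t'. {x,y} \<in> E)"
    using side_no_cross_edge[OF e] by blast
  ultimately show ?thesis
    unfolding sep2_def using side_union[OF e] side_inter[OF e] card_adhesion[OF e] by simp
qed

lemma adhesion_linked:
  assumes e: "{s,t''} \<in> ET" and p: "Vb s \<inter> Vb t'' = {a,b}" "a \<noteq> b"
  shows "(a,b) \<in> (adj_rel (induced E (side t'' s)))\<^sup>*"
proof -
  have e': "{t'',s} \<in> ET" using e by (simp add: insert_commute)
  have "side t'' s \<inter> side s t'' = {a,b}" using side_inter[OF e'] p by (simp add: Int_commute)
  then show ?thesis using sep2_separator_linked[OF graph two_conn sep2_sides[OF e']] p(2) by blast
qed

lemma virtual_edge_linked: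
  assumes e: "{s,t'} \<in> ET" and e'': "{s,t''} \<in> ET" "t'' \<noteq> t'"
    and p: "Vb s \<inter> Vb t'' = {a,b}" "a \<noteq> b" and w: "w \<notin> side t'' s"
  shows "(a,b) \<in> (adj_rel (induced E (side s t' - {w})))\<^sup>*"
proof -
  have "side t'' s \<subseteq> side s t' - {w}" using side_nested[OF e e''] w by auto
  then show ?thesis by (rule rtrancl_adj_induced_mono[OF _ adhesion_linked[OF e''(1) p]])
qed

lemma torso_edge_linked:
  assumes e: "{s,t'} \<in> ET" and ab: "{a,b} \<in> torso_edges E ET Vb beta s" "{a,b} \<noteq> Vb s \<inter> Vb t'"
    and real: "w \<notin> {a,b}"
    and virtual: "\<And>t''. {s,t''} \<in> ET \<Longrightarrow> Vb s \<inter> Vb t'' = {a,b} \<Longrightarrow> w \<notin> side t'' s"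
  shows "(a,b) \<in> (adj_rel (induced E (side s t' - {w})))\<^sup>*"
proof -
  have "a \<noteq> b" using ab(1) unfolding torso_edges_def by auto
  from torso_edge_cases[OF ab(1)] show ?thesis
  proof
    assume "{a,b} \<in> E \<and> beta {a,b} = s"
    then have "(a,b) \<in> adj_rel (induced E (side s t' - {w}))"
      using ab(1) real bag_subset_side[of s t'] unfolding torso_edges_def adj_rel_def induced_def
      by auto
    then show ?thesis by simp
  next
    assume "\<exists>t''. {s,t''} \<in> ET \<and> Vb s \<inter> Vb t'' = {a,b}"
    then obtain t'' where t'': "{s,t''} \<in> ET" "Vb s \<inter> Vb t'' = {a,b}" by blast
    then have "t'' \<noteq> t'" using ab(2) by auto
    then show ?thesis using virtual_edge_linked[OF e t''(1) _ t''(2) \<open>a \<noteq> b\<close> virtual[OF t'']] by blast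
  qed
qed

text \<open>A vertex w of the side beyond s is either a torso vertex of s, or it lies behind a unique
  virtual edge of s, which (the torso being simple) differs from the adhesion set towards t'.
  In both cases one torso vertex c off that adhesion set separates w from every virtual edge
  avoiding c.\<close>

lemma simple_torso_shield:
  assumes e: "{s,t'} \<in> ET" and simple: "torso_simple E ET Vb beta s"
    and w: "w \<in> side s t'" "w \<notin> Vb s \<inter> Vb t'"
  obtains c where "c \<in> Vb s" "c \<notin> Vb t'" "w \<in> Vb s \<Longrightarrow> c = w"
    "\<And>t''. {s,t''} \<in> ET \<Longrightarrow> c \<notin> Vb t'' \<Longrightarrow> w \<notin> side t'' s"
proof (cases "w \<in> Vb s")
  case True
  show ?thesis
  proof (rule that[of w])
    show "\<And>t''. {s,t''} \<in> ET \<Longrightarrow> w \<notin> Vb t'' \<Longrightarrow> w \<notin> side t'' s"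
      using side_inter_bag True by blast
  qed (use True w(2) in auto)
next
  case False
  obtain r where r: "r \<in> branch s t'" "w \<in> Vb r" using w(1) unfolding side_def by blast
  have "r \<noteq> s" using r False by auto
  then obtain t0 where t0: "{s,t0} \<in> ET" "t0 \<noteq> t'" "r \<in> branch t0 s"
    using branch_through_neighbour[OF e r(1)] by blast
  have w0: "w \<in> side t0 s" using r t0 unfolding side_def by blast
  have "Vb s \<inter> Vb t0 \<noteq> Vb s \<inter> Vb t'"
    using not_torso_simple_if_same_adhesion[OF t0(1) _ e _ t0(2)] simple by blast
  then obtain c where c: "c \<in> Vb s \<inter> Vb t0" "c \<notin> Vb s \<inter> Vb t'"
    using card_eq_neq_not_subset card_adhesion[OF t0(1)] card_adhesion[OF e]
    by (metis card.infinite zero_neq_numeral)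
  show ?thesis
  proof (rule that[of c])
    fix t'' assume t'': "{s,t''} \<in> ET" "c \<notin> Vb t''"
    then have "t'' \<noteq> t0" using c by blast
    then show "w \<notin> side t'' s" using sides_inter_subset_bag[OF t0(1) t''(1)] w0 False by blast
  qed (use c False in auto)
qed

text \<open>Deleting w from the side spoils at most the torso edges at the shield vertex c, and the
  torso stays connected after deleting c and one of u, v.\<close>

lemma three_conn_adhesion_linked:
  assumes e: "{s,t'} \<in> ET" and c3: "three_conn s" and X: "Vb s \<inter> Vb t' = {u,v}" "u \<noteq> v"
    and w: "w \<in> side s t' - {u,v}"
  shows "(u,v) \<in> (adj_rel (induced E (side s t' - {w})))\<^sup>*"
proof -
  let ?H = "torso_edges E ET Vb beta s"
  let ?R = "adj_rel (induced E (side s t' - {w}))"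
  have simple: "torso_simple E ET Vb beta s" and tc: "three_connected (Vb s) ?H"
    using c3 unfolding is_3conn_torso_def by simp_all
  obtain c where c: "c \<in> Vb s" "c \<notin> Vb t'" and c_real: "w \<in> Vb s \<Longrightarrow> c = w"
    and c_virtual: "\<And>t''. {s,t''} \<in> ET \<Longrightarrow> c \<notin> Vb t'' \<Longrightarrow> w \<notin> side t'' s"
    using simple_torso_shield[OF e simple, of w] w X by auto
  have cuv: "c \<noteq> u" "c \<noteq> v" using c X by auto
  have lift: "(a,b) \<in> ?R\<^sup>*" if ab: "{a,b} \<in> ?H" "{a,b} \<subseteq> Vb s - {c,x}" and x: "x \<in> {u,v}" for a b x
  proof (rule torso_edge_linked[OF e ab(1)])
    show "{a,b} \<noteq> Vb s \<inter> Vb t'" using ab(2) x X by blast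
    show "w \<notin> {a,b}" using c_real ab(2) by auto
    show "w \<notin> side t'' s" if "{s,t''} \<in> ET" "Vb s \<inter> Vb t'' = {a,b}" for t''
      using c_virtual[OF that(1)] that(2) ab(2) c(1) by blast
  qed
  have "card (Vb s) > 3" using tc unfolding k_connected_def by blast
  moreover have "card {u,v,c} = 3" using cuv X(2) by simp
  ultimately obtain z where z: "z \<in> Vb s" "z \<notin> {u,v,c}"
    using card_less_not_subset[of "{u,v,c}" "Vb s"] by auto
  have uv: "u \<in> Vb s" "v \<in> Vb s" using X by auto
  have "card {c,v} < 3" "card {c,u} < 3" by (simp_all add: card_insert_if)
  have "(u,z) \<in> (adj_rel (induced ?H (Vb s - {c,v})))\<^sup>*"
    by (rule k_connected_reach[OF tc _ \<open>card {c,v} < 3\<close>]) (use c uv z cuv X(2) in auto)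
  then have "(u,z) \<in> ?R\<^sup>*" by (rule rtrancl_adj_lift[rotated]) (rule lift[where x = v], auto)
  moreover have "(z,v) \<in> (adj_rel (induced ?H (Vb s - {c,u})))\<^sup>*"
    by (rule k_connected_reach[OF tc _ \<open>card {c,u} < 3\<close>]) (use c uv z cuv X(2) in auto)
  then have "(z,v) \<in> ?R\<^sup>*" by (rule rtrancl_adj_lift[rotated]) (rule lift[where x = u], auto)
  ultimately show ?thesis by (rule rtrancl_trans)
qed

text \<open>A bond is realised by a real edge or by at least two virtual edges other than the one
  towards t'; by the disjointness of the sides, w lies beyond at most one of them.\<close>

lemma bond_adhesion_linked:
  assumes e: "{s,t'} \<in> ET" and b: "bond s" and X: "Vb s \<inter> Vb t' = {u,v}" "u \<noteq> v"
    and w: "w \<in> side s t' - {u,v}"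
  shows "(u,v) \<in> (adj_rel (induced E (side s t' - {w})))\<^sup>*"
proof (cases "{u,v} \<in> E \<and> beta {u,v} = s")
  case True
  then have "(u,v) \<in> adj_rel (induced E (side s t' - {w}))"
    using bag_subset_side[of s t'] X w unfolding adj_rel_def induced_def by auto
  then show ?thesis by simp
next
  case False
  let ?K = "virtual_edges s {u,v}"
  have VX: "Vb s = {u,v}" using bond_bag_eq_adhesion[OF b e] X by simp
  have "mult s {u,v} \<ge> 3" using b VX unfolding is_bond_def by simp
  then have "card ?K \<ge> 3" using False unfolding torso_mult_eq by simp
  moreover have "t' \<in> ?K" using e X VX unfolding virtual_edges_def by auto
  ultimately have "card {t'} < card (?K - {t'})" using finite_virtual_edges by simp
  then obtain t1 where t1: "t1 \<in> ?K - {t'}" using card_less_not_subset by blast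
  then have "card (?K - {t'} - {t1}) > 0"
    using \<open>card ?K \<ge> 3\<close> \<open>t' \<in> ?K\<close> finite_virtual_edges by (simp add: card_Diff_singleton)
  then obtain t2 where t2: "t2 \<in> ?K - {t'} - {t1}" by (metis card_gt_0_iff ex_in_conv)
  have e1: "{s,t1} \<in> ET" "Vb s \<inter> Vb t1 = {u,v}" using t1 unfolding virtual_edges_def by auto
  have e2: "{s,t2} \<in> ET" "Vb s \<inter> Vb t2 = {u,v}" using t2 unfolding virtual_edges_def by auto
  have "w \<notin> side t1 s \<or> w \<notin> side t2 s"
    using sides_inter_subset_bag[OF e1(1) e2(1)] t2 w VX by blast
  then show ?thesis using virtual_edge_linked[OF e] e1 e2 t1 t2 X(2) by blast
qed

lemma side_two_connected:
  assumes e: "{s,t'} \<in> ET" and "\<not> cycle s"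
  shows "two_connected (side s t') (induced E (side s t'))"
proof -
  have "bond s \<or> three_conn s" using torso_cases edge_nodes[OF e] assms(2) by blast
  obtain u v where X: "Vb s \<inter> Vb t' = {u,v}" "u \<noteq> v"
    using card_adhesion[OF e] by (meson card_2_iff)
  have "\<forall>w \<in> side s t' - {u,v}. (u,v) \<in> (adj_rel (induced E (side s t' - {w})))\<^sup>*"
    using bond_adhesion_linked[OF e _ X] three_conn_adhesion_linked[OF e _ X]
      \<open>bond s \<or> three_conn s\<close> by blast
  then show ?thesis
    using sep2_side_two_connected[OF graph two_conn sep2_sides[OF e]] side_inter[OF e] X by simp
qed

lemma adhesion_hinge:
  assumes e: "{t,t'} \<in> ET" shows "hinge V E (Vb t \<inter> Vb t')"
proof -
  have e': "{t',t} \<in> ET" using e by (simp add: insert_commute)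
  have "two_connected (side t t') (induced E (side t t'))
    \<or> two_connected (side t' t) (induced E (side t' t))"
    using side_two_connected[OF e] side_two_connected[OF e'] no_adjacent_cycles[OF e] by blast
  then show ?thesis unfolding hinge_def using sep2_sides[OF e] side_inter[OF e] by blast
qed

end

section \<open>Disjoint hinges along a long path\<close>

lemma card_meeting_le:
  assumes "finite H" "finite Y" "\<forall>v. card {Z\<in>H. v \<in> Z} \<le> d"
  shows "card {Z\<in>H. Z \<inter> Y \<noteq> {}} \<le> card Y * d"
proof -
  have "{Z\<in>H. Z \<inter> Y \<noteq> {}} = (\<Union>v\<in>Y. {Z\<in>H. v \<in> Z})" by blast
  then have "card {Z\<in>H. Z \<inter> Y \<noteq> {}} \<le> (\<Sum>v\<in>Y. card {Z\<in>H. v \<in> Z})"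
    using assms(1,2) card_UN_le[of Y "\<lambda>v. {Z\<in>H. v \<in> Z}"] by simp
  also have "\<dots> \<le> card Y * d" using sum_bounded_above[of Y _ d] assms(3) by simp
  finally show ?thesis .
qed

text \<open>Greedy choice: a chosen set of size at most k meets at most k*d members of the family.\<close>

lemma disjoint_subfamily:
  fixes H :: "'a set set"
  assumes "\<forall>Y\<in>H. finite Y \<and> card Y \<le> k" and "\<forall>v. card {Y\<in>H. v \<in> Y} \<le> d"
    and "k * m * d < card H"
  shows "\<exists>f. (\<forall>i<Suc m. f i \<in> H) \<and> (\<forall>i<Suc m. \<forall>j<Suc m. i \<noteq> j \<longrightarrow> f i \<inter> f j = {})"
  using assms
proof (induction m arbitrary: H)
  case 0
  then have "H \<noteq> {}" by (intro notI) simp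
  then obtain Y where "Y \<in> H" by blast
  then show ?case by (intro exI[of _ "\<lambda>_. Y"]) auto
next
  case (Suc m)
  have "card H > 0" using Suc.prems(3) by linarith
  then have fin: "finite H" and "H \<noteq> {}" by (simp_all add: card_gt_0_iff)
  then obtain Y where Y: "Y \<in> H" by blast
  define H' where "H' = {Z \<in> H. Z \<inter> Y = {}}"
  have H'H: "H' \<subseteq> H" unfolding H'_def by auto
  have "H - H' = {Z\<in>H. Z \<inter> Y \<noteq> {}}" unfolding H'_def by blast
  then have "card (H - H') \<le> card Y * d"
    using card_meeting_le[OF fin _ Suc.prems(2), of Y] Suc.prems(1) Y by simp
  also have "\<dots> \<le> k * d" using Suc.prems(1) Y by simp
  finally have "card H \<le> card H' + k * d"
    using card_Diff_subset[OF finite_subset[OF H'H fin] H'H] by simp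
  moreover have "k * Suc m * d = k * m * d + k * d" by (simp add: algebra_simps)
  ultimately have "k * m * d < card H'" using Suc.prems(3) by linarith
  moreover have "card {Z\<in>H'. v \<in> Z} \<le> d" for v
  proof -
    have "card {Z\<in>H'. v \<in> Z} \<le> card {Z\<in>H. v \<in> Z}" using fin H'H by (intro card_mono) auto
    then show ?thesis using Suc.prems(2) le_trans by blast
  qed
  moreover have "\<forall>Z\<in>H'. finite Z \<and> card Z \<le> k" using Suc.prems(1) H'H by blast
  ultimately obtain f where f: "\<forall>i<Suc m. f i \<in> H'"
    "\<forall>i<Suc m. \<forall>j<Suc m. i \<noteq> j \<longrightarrow> f i \<inter> f j = {}"
    using Suc.IH[of H'] by blast
  have fY: "f i \<inter> Y = {}" "Y \<inter> f i = {}" if "i < Suc m" for i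
    using f(1) that unfolding H'_def by blast+
  let ?g = "f(Suc m := Y)"
  have "\<forall>i<Suc (Suc m). ?g i \<in> H" using f(1) Y H'H by (auto simp: less_Suc_eq)
  moreover have "?g i \<inter> ?g j = {}" if "i < Suc (Suc m)" "j < Suc (Suc m)" "i \<noteq> j" for i j
  proof (cases "i = Suc m \<or> j = Suc m")
    case True then show ?thesis using that fY by auto
  next
    case False then show ?thesis using that f(2) by auto
  qed
  ultimately show ?case by blast
qed

lemma card_hinges_containing_le_max_spread:
  assumes "finite V" and "\<forall>Y\<in>H. hinge V E Y"
  shows "card {Y\<in>H. v \<in> Y} \<le> max_spread V E"
proof (cases "v \<in> V")
  case True
  have "{Y. hinge V E Y \<and> v \<in> Y} \<subseteq> Pow V" unfolding hinge_def sep2_def by blast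
  then have "card {Y\<in>H. v \<in> Y} \<le> spread V E v"
    unfolding spread_def using assms by (intro card_mono) (auto intro: finite_subset)
  also have "\<dots> \<le> max_spread V E" unfolding max_spread_def using True assms(1) by simp
  finally show ?thesis .
next
  case False
  then have "{Y\<in>H. v \<in> Y} = {}" using assms(2) unfolding hinge_def sep2_def by blast
  then show ?thesis by (metis card.empty le0)
qed

context tutte_decomp
begin

lemma path_adhesion_between:
  assumes p: "is_path N ET ps" and m: "i \<le> m" "m \<le> j" "Suc j < length ps"
    and eq: "Vb (ps!i) \<inter> Vb (ps!Suc i) = Vb (ps!j) \<inter> Vb (ps!Suc j)"
  shows "Vb (ps!m) \<inter> Vb (ps!Suc m) = Vb (ps!i) \<inter> Vb (ps!Suc i)"
proof -
  let ?X = "Vb (ps!i) \<inter> Vb (ps!Suc i)"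
  have "?X \<subseteq> Vb (ps!i) \<inter> Vb (ps!Suc j)" using eq by blast
  then have sub: "?X \<subseteq> Vb (ps!m) \<inter> Vb (ps!Suc m)"
    using path_bags_nth[OF p, of i m "Suc j"] path_bags_nth[OF p, of i "Suc m" "Suc j"] m by auto
  have "card (Vb (ps!m) \<inter> Vb (ps!Suc m)) = 2" "card ?X = 2"
    using card_adhesion is_path_edge[OF p] m by auto
  then show ?thesis using card_subset_eq[OF _ sub] by (metis card.infinite zero_neq_numeral)
qed

text \<open>A longer repetition would make two adjacent nodes of the path bonds, each seeing the
  repeated adhesion set towards both of its path neighbours.\<close>

lemma path_adhesion_repeat:
  assumes p: "is_path N ET ps" and ij: "i < j" "Suc j < length ps"
    and eq: "Vb (ps!i) \<inter> Vb (ps!Suc i) = Vb (ps!j) \<inter> Vb (ps!Suc j)"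
  shows "j = Suc i"
proof (rule ccontr)
  assume "j \<noteq> Suc i"
  then have j: "Suc (Suc i) \<le> j" using ij by simp
  let ?X = "Vb (ps!i) \<inter> Vb (ps!Suc i)"
  define a b c d where "a = ps!i" and "b = ps!Suc i" and "c = ps!Suc (Suc i)"
    and "d = ps!Suc (Suc (Suc i))"
  have len: "Suc (Suc (Suc i)) < length ps" using j ij by simp
  have "distinct ps" using p unfolding is_path_def by simp
  then have "a \<noteq> c" "b \<noteq> d" using len unfolding a_def b_def c_def d_def by (simp_all add: nth_eq_iff_index_eq)
  have ab: "{b,a} \<in> ET" and bc: "{b,c} \<in> ET" and cd: "{c,d} \<in> ET"
    using is_path_edge[OF p, of i] is_path_edge[OF p, of "Suc i"] is_path_edge[OF p, of "Suc (Suc i)"] len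
    unfolding a_def b_def c_def d_def by (simp_all add: insert_commute)
  have "Vb a \<inter> Vb b = ?X" "Vb b \<inter> Vb c = ?X" "Vb c \<inter> Vb d = ?X"
    using path_adhesion_between[OF p _ _ ij(2) eq, of i] path_adhesion_between[OF p _ _ ij(2) eq, of "Suc i"]
      path_adhesion_between[OF p _ _ ij(2) eq, of "Suc (Suc i)"] j
    unfolding a_def b_def c_def d_def by simp_all
  then have "bond b" "bond c"
    using bond_if_same_adhesion[OF _ ab _ bc, of ?X] bond_if_same_adhesion[OF _ _ _ cd, of b ?X]
      edge_nodes[OF bc] bc \<open>a \<noteq> c\<close> \<open>b \<noteq> d\<close> by (auto simp: Int_commute insert_commute)
  then show False using no_adjacent_bonds[OF bc] by blast
qed

lemma card_path_adhesions:
  assumes p: "is_path N ET ps"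
  shows "length ps div 2 \<le> card ((\<lambda>i. Vb (ps!i) \<inter> Vb (ps!Suc i)) ` {..<length ps - 1})"
proof -
  let ?X = "\<lambda>i. Vb (ps!i) \<inter> Vb (ps!Suc i)"
  have even: "Suc (2 * k) < length ps" if "k < length ps div 2" for k using that by linarith
  have "inj_on (\<lambda>k. ?X (2 * k)) {..<length ps div 2}"
  proof (rule linorder_inj_onI')
    fix k k' assume "k \<in> {..<length ps div 2}" "k' \<in> {..<length ps div 2}" "k < k'"
    moreover have "2 * k' \<noteq> Suc (2 * k)" by presburger
    ultimately show "?X (2 * k) \<noteq> ?X (2 * k')"
      using path_adhesion_repeat[OF p, of "2 * k" "2 * k'"] even[of k'] by auto
  qed
  then have "length ps div 2 = card ((\<lambda>k. ?X (2 * k)) ` {..<length ps div 2})"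
    by (simp add: card_image)
  also have "\<dots> \<le> card (?X ` {..<length ps - 1})"
  proof (rule card_mono)
    show "(\<lambda>k. ?X (2 * k)) ` {..<length ps div 2} \<subseteq> ?X ` {..<length ps - 1}"
    proof
      fix Y assume "Y \<in> (\<lambda>k. ?X (2 * k)) ` {..<length ps div 2}"
      then obtain k where "k < length ps div 2" "Y = ?X (2 * k)" by blast
      moreover from even[OF this(1)] have "2 * k \<in> {..<length ps - 1}" by simp
      ultimately show "Y \<in> ?X ` {..<length ps - 1}" by blast
    qed
  qed simp
  finally show ?thesis .
qed

lemma parallel_hinges_along_path:
  assumes p: "is_path N ET ps" and n: "0 < n"
    and long: "2 * (n - 1) * max_spread V E < length ps div 2"
  shows "has_parallel_hinges V E N ET Vb n"
proof -
  define H where "H = (\<lambda>i. Vb (ps!i) \<inter> Vb (ps!Suc i)) ` {..<length ps - 1}"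
  have "{ps!i, ps!Suc i} \<in> ET" if "i < length ps - 1" for i
    using is_path_edge[OF p] that by simp
  then have hinges: "\<forall>Y\<in>H. hinge V E Y" and pairs: "\<forall>Y\<in>H. finite Y \<and> card Y \<le> 2"
    unfolding H_def using adhesion_hinge card_adhesion by (auto simp: card_ge_0_finite)
  have spread: "\<forall>v. card {Y\<in>H. v \<in> Y} \<le> max_spread V E"
    using card_hinges_containing_le_max_spread[OF finite_vertices hinges] by blast
  have many: "2 * (n - 1) * max_spread V E < card H"
    using long card_path_adhesions[OF p] unfolding H_def by linarith
  have "Suc (n - 1) = n" using n by simp
  then obtain f where f: "\<forall>i<n. f i \<in> H" "\<forall>i<n. \<forall>j<n. i \<noteq> j \<longrightarrow> f i \<inter> f j = {}"
    using disjoint_subfamily[OF pairs spread many] by metis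
  have "\<exists>t\<in>set ps. f i \<subseteq> Vb t" if i: "i < n" for i
  proof -
    obtain j where "j < length ps - 1" "f i = Vb (ps!j) \<inter> Vb (ps!Suc j)"
      using f(1) i unfolding H_def by blast
    then show ?thesis using nth_mem[of j ps] by auto
  qed
  then show ?thesis unfolding has_parallel_hinges_def using hinges f p by blast
qed

end

lemma tutte_decomp_if_tutte_decomposition:
  assumes "graph V E" "two_connected V E" "tutte_decomposition V E N ET Vb"
  obtains beta where "tutte_decomp V E N ET Vb beta"
proof -
  from assms(3) obtain beta where "tree_decomposition V E N ET Vb"
    and "\<forall>t t'. {t,t'} \<in> ET \<longrightarrow> card (Vb t \<inter> Vb t') = 2"
    and "\<forall>t\<in>N. is_bond E ET Vb beta t \<or> is_cycle_torso E ET Vb beta t \<or> is_3conn_torso E ET Vb beta t"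
    and "\<forall>t t'. {t,t'} \<in> ET \<longrightarrow> \<not> (is_bond E ET Vb beta t \<and> is_bond E ET Vb beta t')"
    and "\<forall>t t'. {t,t'} \<in> ET \<longrightarrow> \<not> (is_cycle_torso E ET Vb beta t \<and> is_cycle_torso E ET Vb beta t')"
    unfolding tutte_decomposition_def by blast
  then have "tutte_decomp V E N ET Vb beta"
    using assms(1,2) by unfold_locales blast+
  then show ?thesis by (rule that)
qed

theorem mainTheorem15:
  fixes V :: "'a set" and E :: "'a set set"
    and N :: "'b set" and ET :: "'b set set" and Vb :: "'b \<Rightarrow> 'a set" and n :: nat
  assumes "graph V E"
    and "two_connected V E"
    and "tutte_decomposition V E N ET Vb"
    and "n \<ge> 2"
    and "diameter N ET > 4 * n * max_spread V E"
  shows "has_parallel_hinges V E N ET Vb n"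
proof -
  obtain beta where "tutte_decomp V E N ET Vb beta"
    using tutte_decomp_if_tutte_decomposition[OF assms(1-3)] .
  then interpret tutte_decomp V E N ET Vb beta .
  obtain ps where ps: "is_path N ET ps" "length ps = Suc (diameter N ET)"
    using diameter_path by blast
  define P where "P = n * max_spread V E"
  have "4 * P < diameter N ET" using assms(5) by (simp add: P_def mult.assoc)
  then have half: "2 * P < length ps div 2" using ps(2) by linarith
  have "2 * (n - 1) * max_spread V E \<le> 2 * P" unfolding P_def by (simp add: mult_le_mono1)
  also note half
  finally show ?thesis using parallel_hinges_along_path[OF ps(1)] assms(4) by simp
qed

end
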